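(* Let $Q$ be an anti-symmetric quiver on vertices $1,\dots,n,\tilde1,\dots,\tilde n$ with exchange matrix $(b_{ij})$. Suppose $\Sigma_Q=(\{x_1,\dots,x_n\},\{F_1^Q,\dots,F_n^Q\})$ is a valid LP seed and $\hat F_i=F_i$ for all $i\in\{1,\dots,n\}$. Let $i$ be a vertex of $Q$ such that there is no path $a\to i\to\tilde a$ for any vertex $a$. Then mutation at $i$ and $\tilde i$ in $Q$ corresponds to LP mutation of $\Sigma_Q$ at $i$, i.e. $$\Big(\{x_1,\dots,\tfrac{F_i}{x_i},\dots,x_n\},\{F_1^{\mu_i\circ\mu_{\tilde i}(Q)},\dots,F_n^{\mu_i\circ\mu_{\tilde i}(Q)}\}\Big)=\mu_i\big(\{x_1,\dots,x_n\},\{F_1^Q,\dots,F_n^Q\}\big).$$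
   Context: A quiver $Q$ (no loops) is encoded by the skew-symmetric matrix $b_{ij}=$ (number of arrows $i\to j$) $-$ (number of arrows $j\to i$); $\mu_k$ denotes Fomin–Zelevinsky quiver mutation. $Q$ on vertices $1,\dots,n,\tilde1,\dots,\tilde n$ (with $\tilde{\tilde i}=i$) is anti-symmetric if $i\to j$ iff $\tilde j\to\tilde i$ for all vertices $i,j$, and there is no arrow $i\to\tilde i$. For $j\in\{1,\dots,n\}$ set $F_j^Q=\prod_{b_{ij}+b_{\tilde ij}>0}x_i^{b_{ij}+b_{\tilde ij}}+\prod_{b_{ij}+b_{\tilde ij}<0}x_i^{-(b_{ij}+b_{\tilde ij})}$, products over $i\in\{1,\dots,n\}$, in $\mathbb{Z}[x_1,\dots,x_n]$. LP seed over $R=\mathbb{Z}$: $(\mathbf x,\mathbf F)$ with $\mathbf x$ a transcendence basis of the field and each $F_i$ an irreducible polynomial not involving $x_i$ and not equal to any $x_k$. Normalisation: $\hat F_j=F_j/\prod_{k\ne j}x_k^{a_k}$ where $a_k\ge0$ is maximal such that $F_k^{a_k}$ divides $F_j|_{x_k\leftarrow F_k/x}$ in $R[x_1,\dots,x_{k-1},x^{\pm1},x_{k+1},\dots,x_n]$. LP mutation at $i$: $x_i'=\hat F_i/x_i$, $x_j'=x_j$ ($j\ne i$); if $x_i\notin F_j$ then $F_j'=F_j$; otherwise $G_j=F_j|_{x_i\leftarrow \hat F_i|_{x_j\leftarrow0}/x_i'}$, $H_j$ = $G_j$ with all common factors with $\hat F_i|_{x_j\leftarrow0}$ divided out, and $F_j'=MH_j$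 with $M$ the unique monic Laurent monomial in the new variables such that $F_j'$ is a polynomial not divisible by any new variable. Exchange polynomials are defined up to units of $R$. *)

theory Defs
  imports "HOL-Library.Poly_Mapping" "HOL-Computational_Algebra.Factorial_Ring"
begin

text \<open>A Laurent polynomial is a finitely supported map from exponent vectors
(nat =>0 int, the exponent of x_l at l) to integer coefficients.
Variable index 0 is never used.\<close>

type_synonym lpoly = "(nat \<Rightarrow>\<^sub>0 int) \<Rightarrow>\<^sub>0 int"

definition X :: "nat \<Rightarrow> lpoly" where
  "X l = Poly_Mapping.single (Poly_Mapping.single l 1) 1"

definition Xinv :: "nat \<Rightarrow> lpoly" where
  "Xinv l = Poly_Mapping.single (Poly_Mapping.single l (-1)) 1"

definition is_poly :: "nat \<Rightarrow> lpoly \<Rightarrow> bool" where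
  "is_poly n P \<longleftrightarrow> (\<forall>m\<in>Poly_Mapping.keys P. \<forall>l. Poly_Mapping.lookup m l \<ge> 0 \<and> (l \<notin> {1..n} \<longrightarrow> Poly_Mapping.lookup m l = 0))"

text \<open>Membership in Z[x_1,..,x_{k-1},x^{+-1},x_{k+1},..,x_n] (the new variable x sits at index k).\<close>
definition is_poly_laurent_at :: "nat \<Rightarrow> nat \<Rightarrow> lpoly \<Rightarrow> bool" where
  "is_poly_laurent_at n k P \<longleftrightarrow>
     (\<forall>m\<in>Poly_Mapping.keys P. \<forall>l. (l \<noteq> k \<longrightarrow> Poly_Mapping.lookup m l \<ge> 0) \<and> (l \<notin> {1..n} \<longrightarrow> Poly_Mapping.lookup m l = 0))"

definition involves :: "nat \<Rightarrow> lpoly \<Rightarrow> bool" where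
  "involves l P \<longleftrightarrow> (\<exists>m\<in>Poly_Mapping.keys P. Poly_Mapping.lookup m l \<noteq> 0)"

text \<open>Substitution x_k <- R in P (meaningful when P has no negative power of x_k,
which is the only way it is used).\<close>
definition subst :: "nat \<Rightarrow> lpoly \<Rightarrow> lpoly \<Rightarrow> lpoly" where
  "subst k R P = (\<Sum>m\<in>Poly_Mapping.keys P.
      Poly_Mapping.single (Poly_Mapping.update k 0 m) (Poly_Mapping.lookup P m) * R ^ nat (Poly_Mapping.lookup m k))"

definition poly_unit :: "nat \<Rightarrow> lpoly \<Rightarrow> bool" where
  "poly_unit n A \<longleftrightarrow> is_poly n A \<and> (\<exists>C. is_poly n C \<and> A * C = 1)"

definition poly_irreducible :: "nat \<Rightarrow> lpoly \<Rightarrow> bool" where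
  "poly_irreducible n P \<longleftrightarrow> is_poly n P \<and> P \<noteq> 0 \<and> \<not> poly_unit n P \<and>
     (\<forall>A B. is_poly n A \<and> is_poly n B \<and> P = A * B \<longrightarrow> poly_unit n A \<or> poly_unit n B)"

definition poly_dvd :: "nat \<Rightarrow> lpoly \<Rightarrow> lpoly \<Rightarrow> bool" where
  "poly_dvd n A P \<longleftrightarrow> (\<exists>C. is_poly n C \<and> P = A * C)"

definition monic_laurent_monomial :: "lpoly \<Rightarrow> bool" where
  "monic_laurent_monomial M \<longleftrightarrow> (\<exists>m. M = Poly_Mapping.single m 1)"

definition valid_LP_seed :: "nat \<Rightarrow> (nat \<Rightarrow> lpoly) \<Rightarrow> bool" where
  "valid_LP_seed n F \<longleftrightarrow> (\<forall>i\<in>{1..n}. poly_irreducible n (F i) \<and> \<not> involves i (F i) \<and>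
      (\<forall>k\<in>{1..n}. F i \<noteq> X k \<and> F i \<noteq> - X k))"

definition norm_exp :: "nat \<Rightarrow> (nat \<Rightarrow> lpoly) \<Rightarrow> nat \<Rightarrow> nat \<Rightarrow> nat" where
  "norm_exp n F j k = (GREATEST a. \<exists>C. is_poly_laurent_at n k C \<and>
       subst k (F k * Xinv k) (F j) = F k ^ a * C)"

definition hatF :: "nat \<Rightarrow> (nat \<Rightarrow> lpoly) \<Rightarrow> nat \<Rightarrow> lpoly" where
  "hatF n F j = F j * (\<Prod>k\<in>{1..n} - {j}. Xinv k ^ norm_exp n F j k)"

text \<open>Exchange polynomials of the mutated seed are polynomials in the new
variables; we represent the new variables x_1',..,x_n' again by X 1,..,X n.
lp_mut_exch n F i j P says that P is (a representative, up to units of Z, of) F_j'.\<close>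
definition lp_mut_var :: "nat \<Rightarrow> (nat \<Rightarrow> lpoly) \<Rightarrow> nat \<Rightarrow> lpoly" where
  "lp_mut_var n F i = hatF n F i * Xinv i"

definition lp_mut_exch :: "nat \<Rightarrow> (nat \<Rightarrow> lpoly) \<Rightarrow> nat \<Rightarrow> nat \<Rightarrow> lpoly \<Rightarrow> bool" where
  "lp_mut_exch n F i j P \<longleftrightarrow>
    (if \<not> involves i (F j) then P = F j \<or> P = - F j
     else (let S = subst j 0 (hatF n F i);
               G = subst i (S * Xinv i) (F j)
           in \<exists>H K M. G = K * H \<and>
                (\<forall>p. irreducible p \<and> p dvd K \<longrightarrow> p dvd S) \<and>
                (\<forall>p. irreducible p \<and> p dvd H \<longrightarrow> \<not> p dvd S) \<and>
                monic_laurent_monomial M \<and> P = M * H \<and> is_poly n P \<and>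
                (\<forall>l\<in>{1..n}. \<not> poly_dvd n (X l) P)))"

text \<open>Vertices are the integers v with 1 <= |v| <= n; vertex k (k>0) is k and
vertex ~k is -k, so tilde is negation. A quiver is its skew-symmetric exchange
matrix B (B a b = #arrows a->b minus #arrows b->a), zero outside the vertex set.\<close>

definition vertices :: "nat \<Rightarrow> int set" where
  "vertices n = {v. 1 \<le> \<bar>v\<bar> \<and> \<bar>v\<bar> \<le> int n}"

definition quiver_matrix :: "nat \<Rightarrow> (int \<Rightarrow> int \<Rightarrow> int) \<Rightarrow> bool" where
  "quiver_matrix n B \<longleftrightarrow> (\<forall>a b. B a b = - B b a) \<and>
     (\<forall>a b. a \<notin> vertices n \<or> b \<notin> vertices n \<longrightarrow> B a b = 0)"

definition anti_symmetric_quiver :: "nat \<Rightarrow> (int \<Rightarrow> int \<Rightarrow> int) \<Rightarrow> bool" where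
  "anti_symmetric_quiver n B \<longleftrightarrow> quiver_matrix n B \<and>
     (\<forall>a\<in>vertices n. \<forall>b\<in>vertices n. B a b = B (- b) (- a)) \<and>
     (\<forall>a\<in>vertices n. B a (- a) = 0)"

definition mut :: "int \<Rightarrow> (int \<Rightarrow> int \<Rightarrow> int) \<Rightarrow> int \<Rightarrow> int \<Rightarrow> int" where
  "mut k B a b = (if a = k \<or> b = k then - B a b
      else B a b + max (B a k) 0 * max (B k b) 0 - max (- B a k) 0 * max (- B k b) 0)"

definition FQ :: "nat \<Rightarrow> (int \<Rightarrow> int \<Rightarrow> int) \<Rightarrow> nat \<Rightarrow> lpoly" where
  "FQ n B j = (\<Prod>l\<in>{1..n}. X l ^ nat (B (int l) (int j) + B (- int l) (int j)))
            + (\<Prod>l\<in>{1..n}. X l ^ nat (- (B (int l) (int j) + B (- int l) (int j))))"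

end

theory Submission
  imports Defs
begin

text \<open>Write \<open>c(l,j) = b(l,j) + b(~l,j)\<close> (the constant \<open>folded\<close>). Then \<open>F_j^Q\<close> is the binomial
  \<open>x^[c_j]_+ + x^[-c_j]_+\<close> in the folded column \<open>c_j\<close>. If \<open>x_i\<close> does not occur in \<open>F_j\<close>,
  the folded column \<open>j\<close> is unchanged by \<open>\<mu>_i \<mu>_~i\<close> (for \<open>j = i\<close> it is negated, which only swaps
  the two monomials). Otherwise \<open>F_i|x_j\<leftarrow>0\<close> is a single monomial \<open>x^e\<close>, a unit, so LP mutation
  only substitutes \<open>x_i \<leftarrow> x^e / x_i'\<close> and clears a monomial factor. The resulting exponents
  are those of \<open>F_j\<close> for the mutated quiver: without paths \<open>a \<rightarrow> i \<rightarrow> ~a\<close> the entries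
  \<open>b(l,i)\<close> and \<open>b(~l,i)\<close> have the same sign, and then the Fomin--Zelevinsky corrections of the
  two mutations add up to \<open>c(i,j) * e_l\<close>.\<close>

definition lmono :: "(nat \<Rightarrow>\<^sub>0 int) \<Rightarrow> lpoly" where
  "lmono m = Poly_Mapping.single m 1"

lemma lmono_add: "lmono (a + b) = lmono a * lmono b"
  by (simp add: lmono_def mult_single)

lemma lmono_0: "lmono 0 = 1"
  by (simp add: lmono_def)

text \<open>Exponent vectors carry the convolution ring structure of \<open>poly_mapping\<close>, in which
  \<open>of_nat k * a\<close> is the \<open>k\<close>-fold sum of \<open>a\<close>.\<close>

lemma lmono_power: "lmono a ^ k = lmono (of_nat k * a)"
  by (induction k) (simp_all add: lmono_0 lmono_add distrib_right)

lemma lookup_of_nat_mult: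
  "Poly_Mapping.lookup (of_nat k * a) l = int k * Poly_Mapping.lookup a l"
  by (simp flip: single_of_nat mult_map_scale_conv_mult add: Poly_Mapping.map.rep_eq when_def)

lemma lmono_dvd_1: "lmono a dvd 1"
proof
  show "1 = lmono a * lmono (- a)" by (simp flip: lmono_add add: lmono_0)
qed

lemma keys_lmono_add_lmono: "Poly_Mapping.keys (lmono a + lmono b) = {a, b}"
  by (auto simp: in_keys_iff lookup_add lmono_def lookup_single when_def split: if_splits)

lemma keys_lmono: "Poly_Mapping.keys (lmono a) = {a}"
  by (simp add: lmono_def)

lemma X_eq_lmono: "X l = lmono (Poly_Mapping.single l 1)"
  by (simp add: X_def lmono_def)

lemma Xinv_eq_lmono: "Xinv l = lmono (Poly_Mapping.single l (-1))"
  by (simp add: Xinv_def lmono_def)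

lemma binomial_factor:
  assumes "a - c = b - d"
  shows "lmono a + lmono b = lmono (a - c) * (lmono c + lmono d)"
proof -
  have "a = (a - c) + c" "b = (a - c) + d"
    using assms by (simp_all add: algebra_simps)
  then show ?thesis
    by (metis distrib_left lmono_add)
qed

lemma X_power: "X l ^ k = lmono (Poly_Mapping.single l (int k))"
proof (induction k)
  case (Suc k)
  then show ?case
    by (simp add: X_eq_lmono add.commute flip: lmono_add single_add)
qed (simp add: lmono_0)

lemma prod_X_power:
  "finite A \<Longrightarrow> (\<Prod>l\<in>A. X l ^ f l) = lmono (\<Sum>l\<in>A. Poly_Mapping.single l (int (f l)))"
  by (induction A rule: finite_induct) (simp_all add: lmono_0 X_power lmono_add)

lemma X_dvd_binomial:
  assumes "poly_dvd n (X l) (lmono a + lmono b)"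
  shows "0 < Poly_Mapping.lookup a l \<and> 0 < Poly_Mapping.lookup b l"
proof -
  obtain C where C: "is_poly n C" "lmono a + lmono b = X l * C"
    using assms unfolding poly_dvd_def by blast
  define d where "d = Poly_Mapping.single l (1::int)"
  have "C = lmono (- d) * (lmono a + lmono b)"
    by (simp add: C(2) X_eq_lmono d_def mult.assoc lmono_0 flip: lmono_add mult.assoc)
  then have "Poly_Mapping.keys C = {a - d, b - d}"
    by (simp add: distrib_left keys_lmono_add_lmono flip: lmono_add)
  with C(1) have "0 \<le> Poly_Mapping.lookup (a - d) l" "0 \<le> Poly_Mapping.lookup (b - d) l"
    unfolding is_poly_def by auto
  then show ?thesis
    by (simp add: lookup_minus d_def)
qed

definition exps :: "nat \<Rightarrow> (nat \<Rightarrow> int) \<Rightarrow> (nat \<Rightarrow>\<^sub>0 int)" where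
  "exps n g = (\<Sum>l\<in>{1..n}. Poly_Mapping.single l (g l))"

lemma lookup_exps: "Poly_Mapping.lookup (exps n g) l = (if l \<in> {1..n} then g l else 0)"
  by (simp add: exps_def lookup_sum lookup_single when_def)

lemma exps_cong: "(\<And>l. l \<in> {1..n} \<Longrightarrow> f l = g l) \<Longrightarrow> exps n f = exps n g"
  unfolding exps_def by (rule sum.cong) auto

definition folded :: "(int \<Rightarrow> int \<Rightarrow> int) \<Rightarrow> nat \<Rightarrow> nat \<Rightarrow> int" where
  "folded B l j = B (int l) (int j) + B (- int l) (int j)"

abbreviation pos_exps :: "nat \<Rightarrow> (int \<Rightarrow> int \<Rightarrow> int) \<Rightarrow> nat \<Rightarrow> (nat \<Rightarrow>\<^sub>0 int)" where
  "pos_exps n B j \<equiv> exps n (\<lambda>l. int (nat (folded B l j)))"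

abbreviation neg_exps :: "nat \<Rightarrow> (int \<Rightarrow> int \<Rightarrow> int) \<Rightarrow> nat \<Rightarrow> (nat \<Rightarrow>\<^sub>0 int)" where
  "neg_exps n B j \<equiv> exps n (\<lambda>l. int (nat (- folded B l j)))"

lemma FQ_eq_binomial: "FQ n B j = lmono (pos_exps n B j) + lmono (neg_exps n B j)"
  unfolding FQ_def prod_X_power[OF finite_atLeastAtMost] exps_def folded_def ..

lemma lookup_pos_minus_neg_exps:
  "Poly_Mapping.lookup (pos_exps n B j - neg_exps n B j) l = (if l \<in> {1..n} then folded B l j else 0)"
  by (simp add: lookup_minus lookup_exps)

lemma involves_FQ_iff: "k \<in> {1..n} \<Longrightarrow> involves k (FQ n B j) \<longleftrightarrow> folded B k j \<noteq> 0"
  unfolding involves_def FQ_eq_binomial keys_lmono_add_lmono by (auto simp: lookup_exps)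

lemma is_poly_FQ: "is_poly n (FQ n B j)"
  unfolding is_poly_def FQ_eq_binomial keys_lmono_add_lmono by (auto simp: lookup_exps)

lemma X_not_dvd_FQ: "l \<in> {1..n} \<Longrightarrow> \<not> poly_dvd n (X l) (FQ n B j)"
  unfolding FQ_eq_binomial by (auto dest!: X_dvd_binomial simp: lookup_exps split: if_splits)

lemma subst_mono_neutral:
  assumes "finite S" "Poly_Mapping.keys P \<subseteq> S"
  shows "subst k R P = (\<Sum>m\<in>S. Poly_Mapping.single (Poly_Mapping.update k 0 m) (Poly_Mapping.lookup P m)
                                  * R ^ nat (Poly_Mapping.lookup m k))"
  unfolding subst_def by (rule sum.mono_neutral_left) (use assms in \<open>auto simp: in_keys_iff\<close>)

lemma subst_add: "subst k R (P + Q) = subst k R P + subst k R Q"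
proof -
  let ?S = "Poly_Mapping.keys P \<union> Poly_Mapping.keys Q"
  have "Poly_Mapping.keys (P + Q) \<subseteq> ?S"
    by (rule keys_add)
  then show ?thesis
    using subst_mono_neutral[of ?S] by (simp add: lookup_add single_add distrib_right sum.distrib)
qed

lemma subst_lmono:
  "subst k R (lmono m) = lmono (Poly_Mapping.update k 0 m) * R ^ nat (Poly_Mapping.lookup m k)"
  by (simp add: subst_def keys_lmono lmono_def)

lemma update_0_eq_self: "Poly_Mapping.lookup m k = 0 \<Longrightarrow> Poly_Mapping.update k 0 m = m"
  by (rule poly_mapping_eqI) (auto simp: lookup_update)

lemma subst_0_binomial:
  assumes "0 < Poly_Mapping.lookup a k" "Poly_Mapping.lookup b k = 0"
  shows "subst k 0 (lmono a + lmono b) = lmono b"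
  using assms by (simp add: subst_add subst_lmono update_0_eq_self)

lemma subst_lmono_lmono:
  "subst k (lmono d) (lmono m) = lmono (Poly_Mapping.update k 0 m + of_nat (nat (Poly_Mapping.lookup m k)) * d)"
  by (simp add: subst_lmono lmono_power lmono_add)

definition mut_correction :: "int \<Rightarrow> int \<Rightarrow> int" where
  "mut_correction x y = max x 0 * max y 0 - max (- x) 0 * max (- y) 0"

lemma mut_away: "a \<noteq> k \<Longrightarrow> b \<noteq> k \<Longrightarrow> mut k B a b = B a b + mut_correction (B a k) (B k b)"
  by (simp add: mut_def mut_correction_def)

lemma mut_correction_0 [simp]: "mut_correction x 0 = 0" "mut_correction 0 y = 0"
  by (simp_all add: mut_correction_def)

lemma mut_correction_sum:
  fixes p q s t :: int
  assumes "0 \<le> p * q" "0 \<le> s * t"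
  shows "mut_correction p (- s) + mut_correction q (- s) + mut_correction (- p) t + mut_correction (- q) t
           = (t - s) * (if 0 < s + t then max (- (p + q)) 0 else max (p + q) 0)"
proof -
  have "0 \<le> p \<and> 0 \<le> q \<or> p \<le> 0 \<and> q \<le> 0" "s = 0 \<and> t = 0 \<or> 0 \<le> s \<and> 0 \<le> t \<and> 0 < s + t \<or> s \<le> 0 \<and> t \<le> 0"
    using assms by (auto simp: zero_le_mult_iff)
  then show ?thesis
    unfolding mut_correction_def
    by (elim disjE conjE) (auto simp: max_absorb1 max_absorb2 algebra_simps)
qed

lemma anti_symmetric_quiver_skew: "anti_symmetric_quiver n B \<Longrightarrow> B a b = - B b a"
  unfolding anti_symmetric_quiver_def quiver_matrix_def by blast

lemma anti_symmetric_quiver_flip: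
  assumes "anti_symmetric_quiver n B"
  shows "B a b = B (- b) (- a)"
proof (cases "a \<in> vertices n \<and> b \<in> vertices n")
  case True
  then show ?thesis
    using assms unfolding anti_symmetric_quiver_def by blast
next
  case False
  then have "- a \<notin> vertices n \<or> - b \<notin> vertices n"
    by (auto simp: vertices_def)
  with False show ?thesis
    using assms unfolding anti_symmetric_quiver_def quiver_matrix_def by metis
qed

lemma anti_symmetric_quiver_tilde:
  assumes "anti_symmetric_quiver n B"
  shows "B a (- a) = 0"
  using assms unfolding anti_symmetric_quiver_def quiver_matrix_def by blast

lemma folded_via_column:
  "anti_symmetric_quiver n B \<Longrightarrow> folded B i j = B (- int j) (int i) - B (int j) (int i)"
  unfolding folded_def
  by (metis anti_symmetric_quiver_flip anti_symmetric_quiver_skew minus_minus uminus_add_conv_diff add.commute)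

lemma folded_self: "anti_symmetric_quiver n B \<Longrightarrow> folded B i i = 0"
  using anti_symmetric_quiver_skew[of n B "int i" "int i"] anti_symmetric_quiver_tilde[of n B "- int i"]
  by (simp add: folded_def)

definition no_path_through :: "nat \<Rightarrow> (int \<Rightarrow> int \<Rightarrow> int) \<Rightarrow> nat \<Rightarrow> bool" where
  "no_path_through n B i \<longleftrightarrow> (\<forall>a\<in>vertices n. \<not> (B a (int i) > 0 \<and> B (int i) (- a) > 0))"

lemma no_path_through_same_sign:
  assumes anti: "anti_symmetric_quiver n B" and "no_path_through n B i" and l: "l \<in> {1..n}"
  shows "0 \<le> B (int l) (int i) * B (- int l) (int i)"
proof -
  have "int l \<in> vertices n" "- int l \<in> vertices n"
    using l by (auto simp: vertices_def)
  with assms(2) have "\<not> (B (int l) (int i) > 0 \<and> B (int i) (- int l) > 0)"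
    "\<not> (B (- int l) (int i) > 0 \<and> B (int i) (int l) > 0)"
    unfolding no_path_through_def by (metis minus_minus)+
  then show ?thesis
    using anti_symmetric_quiver_skew[OF anti, of "int i"] by (auto simp: zero_le_mult_iff)
qed

lemma folded_transpose_ne_0:
  assumes anti: "anti_symmetric_quiver n B" and "no_path_through n B i" "j \<in> {1..n}"
    and "folded B i j \<noteq> 0"
  shows "folded B j i \<noteq> 0"
proof -
  let ?s = "B (int j) (int i)" and ?t = "B (- int j) (int i)"
  have "0 \<le> ?s * ?t"
    by (rule no_path_through_same_sign[OF assms(1-3)])
  moreover have "folded B i j = ?t - ?s"
    by (rule folded_via_column[OF anti])
  moreover have "folded B j i = ?s + ?t"
    by (simp add: folded_def)
  ultimately show ?thesis
    using assms(4) by (auto simp: zero_le_mult_iff)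
qed

lemma folded_mut_mut:
  assumes anti: "anti_symmetric_quiver n B" and np: "no_path_through n B i" and "i \<in> {1..n}"
    and l: "l \<in> {1..n}" and j: "j \<in> {1..n}" and "l \<noteq> i" "j \<noteq> i"
  shows "folded (mut (int i) (mut (- int i) B)) l j
           = folded B l j + folded B i j *
               (if 0 < folded B j i then max (- folded B l i) 0 else max (folded B l i) 0)"
proof -
  define p q s t where "p = B (int l) (int i)" and "q = B (- int l) (int i)"
    and "s = B (int j) (int i)" and "t = B (- int j) (int i)"
  let ?B1 = "mut (- int i) B"
  have ne: "int l \<noteq> int i" "- int l \<noteq> int i" "int j \<noteq> int i" "int l \<noteq> - int i"
    "- int l \<noteq> - int i" "int j \<noteq> - int i" "int i \<noteq> - int i"
    using assms(3-7) by auto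
  have tilde: "B (- int i) (int i) = 0" "B (int i) (- int i) = 0"
    using anti_symmetric_quiver_tilde[OF anti, of "- int i"] anti_symmetric_quiver_tilde[OF anti, of "int i"]
    by simp_all
  have flips: "B (int l) (- int i) = - q" "B (- int l) (- int i) = - p" "B (- int i) (int j) = t"
    "B (int i) (int j) = - s"
    using anti_symmetric_quiver_flip[OF anti, of "int l" "- int i"]
      anti_symmetric_quiver_flip[OF anti, of "- int l" "- int i"]
      anti_symmetric_quiver_flip[OF anti, of "- int i" "int j"]
      anti_symmetric_quiver_skew[OF anti, of "int i" "- int l"]
      anti_symmetric_quiver_skew[OF anti, of "int i" "int l"]
      anti_symmetric_quiver_skew[OF anti, of "int i" "int j"]
    by (simp_all add: p_def q_def s_def t_def)
  have B1: "?B1 (int l) (int i) = p" "?B1 (- int l) (int i) = q" "?B1 (int i) (int j) = - s"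
    "?B1 (int l) (int j) = B (int l) (int j) + mut_correction (- q) t"
    "?B1 (- int l) (int j) = B (- int l) (int j) + mut_correction (- p) t"
    using ne by (simp_all add: mut_away tilde flips p_def q_def)
  have "folded (mut (int i) ?B1) l j
      = folded B l j + (mut_correction p (- s) + mut_correction q (- s)
                        + mut_correction (- p) t + mut_correction (- q) t)"
    using ne by (simp add: folded_def mut_away B1)
  also have "\<dots> = folded B l j + (t - s) * (if 0 < s + t then max (- (p + q)) 0 else max (p + q) 0)"
    using no_path_through_same_sign[OF anti np l] no_path_through_same_sign[OF anti np j]
    by (simp add: mut_correction_sum p_def q_def s_def t_def)
  also have "\<dots> = folded B l j + folded B i j *
               (if 0 < folded B j i then max (- folded B l i) 0 else max (folded B l i) 0)"
    using folded_via_column[OF anti, of i j] by (simp add: folded_def p_def q_def s_def t_def)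
  finally show ?thesis .
qed

lemma folded_mut_mut_source:
  assumes anti: "anti_symmetric_quiver n B" and "i \<in> {1..n}" "j \<noteq> i"
  shows "folded (mut (int i) (mut (- int i) B)) i j = - folded B i j"
  using assms anti_symmetric_quiver_tilde[OF anti, of "- int i"] anti_symmetric_quiver_tilde[OF anti, of "int i"]
  by (simp add: folded_def mut_def)

lemma folded_mut_mut_target:
  assumes anti: "anti_symmetric_quiver n B" and "i \<in> {1..n}"
  shows "folded (mut (int i) (mut (- int i) B)) l i = - folded B l i"
  using assms anti_symmetric_quiver_tilde[OF anti, of "- int i"] anti_symmetric_quiver_tilde[OF anti, of "int i"]
  by (cases "l = i") (auto simp: folded_def mut_def)

lemma FQ_mut_mut_eq:
  assumes anti: "anti_symmetric_quiver n B" and np: "no_path_through n B i" and i: "i \<in> {1..n}"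
    and j: "j \<in> {1..n}" and zero: "folded B i j = 0"
  shows "FQ n (mut (int i) (mut (- int i) B)) j = FQ n B j"
proof (cases "j = i")
  case True
  have "pos_exps n (mut (int i) (mut (- int i) B)) i = neg_exps n B i"
    "neg_exps n (mut (int i) (mut (- int i) B)) i = pos_exps n B i"
    by (auto intro!: exps_cong simp: folded_mut_mut_target[OF anti i])
  then show ?thesis
    unfolding FQ_eq_binomial True by (simp add: add.commute)
next
  case False
  have "folded (mut (int i) (mut (- int i) B)) l j = folded B l j" if "l \<in> {1..n}" for l
    using folded_mut_mut[OF anti np i that j _ False] folded_mut_mut_source[OF anti i False] zero
    by (cases "l = i") simp_all
  then have "pos_exps n (mut (int i) (mut (- int i) B)) j = pos_exps n B j"
    "neg_exps n (mut (int i) (mut (- int i) B)) j = neg_exps n B j"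
    by (auto intro!: exps_cong)
  then show ?thesis
    unfolding FQ_eq_binomial by simp
qed

lemma subst_0_FQ:
  assumes "j \<in> {1..n}" "folded B j i \<noteq> 0"
  shows "subst j 0 (FQ n B i) = lmono (if 0 < folded B j i then neg_exps n B i else pos_exps n B i)"
proof (cases "0 < folded B j i")
  case True
  then show ?thesis
    using assms unfolding FQ_eq_binomial by (simp add: subst_0_binomial lookup_exps)
next
  case False
  then show ?thesis
    using assms unfolding FQ_eq_binomial add.commute[of "lmono (pos_exps n B i)"]
    by (simp add: subst_0_binomial lookup_exps)
qed

lemma lp_mut_exch_if_specialisation_monomial:
  assumes "involves i (F j)" and S: "subst j 0 (hatF n F i) = lmono e"
    and "P = lmono m * subst i (lmono e * Xinv i) (F j)" "is_poly n P" "\<forall>l\<in>{1..n}. \<not> poly_dvd n (X l) P"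
  shows "lp_mut_exch n F i j P"
proof -
  have no_irreducible_dvd: "\<not> (irreducible p \<and> p dvd lmono a)" for p a
    using lmono_dvd_1[of a] irreducible_not_unit dvd_trans by blast
  let ?G = "subst i (lmono e * Xinv i) (F j)"
  have "\<exists>H K M. ?G = K * H \<and> (\<forall>p. irreducible p \<and> p dvd K \<longrightarrow> p dvd lmono e) \<and>
      (\<forall>p. irreducible p \<and> p dvd H \<longrightarrow> \<not> p dvd lmono e) \<and>
      monic_laurent_monomial M \<and> P = M * H \<and> is_poly n P \<and> (\<forall>l\<in>{1..n}. \<not> poly_dvd n (X l) P)"
    using assms(3-5) no_irreducible_dvd[of _ e] no_irreducible_dvd[of _ 0]
    by (intro exI[of _ ?G] exI[of _ 1] exI[of _ "lmono m"])
      (auto simp: lmono_0 monic_laurent_monomial_def lmono_def)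
  then show ?thesis
    unfolding lp_mut_exch_def Let_def S using assms(1) by simp
qed

lemma pos_minus_neg_exps_mut_mut:
  assumes anti: "anti_symmetric_quiver n B" and np: "no_path_through n B i" and i: "i \<in> {1..n}"
    and j: "j \<in> {1..n}" and ji: "j \<noteq> i"
    and lookup_d: "\<And>l. Poly_Mapping.lookup d l = (if l = i then -1 else if l \<in> {1..n} then
      (if 0 < folded B j i then max (- folded B l i) 0 else max (folded B l i) 0) else 0)"
  shows "pos_exps n (mut (int i) (mut (- int i) B)) j - neg_exps n (mut (int i) (mut (- int i) B)) j
    = (Poly_Mapping.update i 0 (pos_exps n B j) + of_nat (nat (folded B i j)) * d)
      - (Poly_Mapping.update i 0 (neg_exps n B j) + of_nat (nat (- folded B i j)) * d)"
    (is "?lhs = ?g1 - ?g2")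
proof (rule poly_mapping_eqI)
  fix l
  have lookup_g: "Poly_Mapping.lookup (?g1 - ?g2) l
      = (if l = i then 0 else Poly_Mapping.lookup (pos_exps n B j - neg_exps n B j) l)
        + folded B i j * Poly_Mapping.lookup d l"
    by (simp add: lookup_minus lookup_add lookup_update lookup_of_nat_mult flip: left_diff_distrib)
  consider "l \<notin> {1..n}" | "l = i" | "l \<in> {1..n}" "l \<noteq> i"
    using i by blast
  then show "Poly_Mapping.lookup ?lhs l = Poly_Mapping.lookup (?g1 - ?g2) l"
  proof cases
    case 1
    then show ?thesis
      using i unfolding lookup_pos_minus_neg_exps lookup_g lookup_d by auto
  next
    case 2
    then show ?thesis
      using i folded_mut_mut_source[OF anti i ji]
      unfolding lookup_pos_minus_neg_exps lookup_g lookup_d by simp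
  next
    case 3
    then show ?thesis
      using folded_mut_mut[OF anti np i _ j _ ji] unfolding lookup_pos_minus_neg_exps lookup_g lookup_d
      by simp
  qed
qed

lemma lp_mut_exch_FQ_involves:
  assumes anti: "anti_symmetric_quiver n B" and np: "no_path_through n B i" and i: "i \<in> {1..n}"
    and j: "j \<in> {1..n}" and hat: "hatF n (FQ n B) i = FQ n B i" and nz: "folded B i j \<noteq> 0"
  shows "lp_mut_exch n (FQ n B) i j (FQ n (mut (int i) (mut (- int i) B)) j)"
proof -
  let ?B' = "mut (int i) (mut (- int i) B)"
  have ji: "j \<noteq> i"
    using nz folded_self[OF anti] by auto
  have nz': "folded B j i \<noteq> 0"
    by (rule folded_transpose_ne_0[OF anti np j nz])
  define e where "e = (if 0 < folded B j i then neg_exps n B i else pos_exps n B i)"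
  have S: "subst j 0 (hatF n (FQ n B) i) = lmono e"
    unfolding hat e_def by (rule subst_0_FQ[OF j nz'])
  define d where "d = e + Poly_Mapping.single i (-1)"
  have lookup_d: "Poly_Mapping.lookup d l = (if l = i then -1 else if l \<in> {1..n} then
      (if 0 < folded B j i then max (- folded B l i) 0 else max (folded B l i) 0) else 0)" for l
    using folded_self[OF anti, of i] by (auto simp: d_def e_def lookup_add lookup_single lookup_exps max_def)
  define g1 where "g1 = Poly_Mapping.update i 0 (pos_exps n B j) + of_nat (nat (folded B i j)) * d"
  define g2 where "g2 = Poly_Mapping.update i 0 (neg_exps n B j) + of_nat (nat (- folded B i j)) * d"
  have e_Xinv: "lmono e * Xinv i = lmono d"
    by (simp add: d_def Xinv_eq_lmono lmono_add)
  have G: "subst i (lmono e * Xinv i) (FQ n B j) = lmono g1 + lmono g2"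
    unfolding e_Xinv FQ_eq_binomial subst_add subst_lmono_lmono g1_def g2_def
    using i by (simp add: lookup_exps)
  have "pos_exps n ?B' j - neg_exps n ?B' j = g1 - g2"
    unfolding g1_def g2_def by (rule pos_minus_neg_exps_mut_mut[OF anti np i j ji lookup_d])
  then have "FQ n ?B' j = lmono (pos_exps n ?B' j - g1) * (lmono g1 + lmono g2)"
    unfolding FQ_eq_binomial by (intro binomial_factor) (simp add: algebra_simps)
  then have P: "FQ n ?B' j = lmono (pos_exps n ?B' j - g1) * subst i (lmono e * Xinv i) (FQ n B j)"
    by (simp only: G)
  show ?thesis
    by (rule lp_mut_exch_if_specialisation_monomial[OF _ S P is_poly_FQ])
      (simp_all add: involves_FQ_iff[OF i] nz X_not_dvd_FQ)
qed

theorem proposition4p8: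
  fixes n :: nat and B :: "int \<Rightarrow> int \<Rightarrow> int" and i :: nat
  assumes "anti_symmetric_quiver n B"
    and "valid_LP_seed n (FQ n B)"
    and "\<forall>k\<in>{1..n}. hatF n (FQ n B) k = FQ n B k"
    and "i \<in> {1..n}"
    and "\<forall>a\<in>vertices n. \<not> (B a (int i) > 0 \<and> B (int i) (- a) > 0)"
  shows "lp_mut_var n (FQ n B) i = FQ n B i * Xinv i \<and>
    (\<forall>j\<in>{1..n}. lp_mut_exch n (FQ n B) i j (FQ n (mut (int i) (mut (- int i) B)) j))"
proof -
  have hat: "hatF n (FQ n B) i = FQ n B i"
    using assms(3,4) by blast
  have np: "no_path_through n B i"
    using assms(5) unfolding no_path_through_def .
  have "lp_mut_exch n (FQ n B) i j (FQ n (mut (int i) (mut (- int i) B)) j)" if j: "j \<in> {1..n}" for j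
  proof (cases "folded B i j = 0")
    case True
    then have "\<not> involves i (FQ n B j)"
      using involves_FQ_iff[OF assms(4)] by simp
    then show ?thesis
      unfolding lp_mut_exch_def FQ_mut_mut_eq[OF assms(1) np assms(4) j True] by simp
  next
    case False
    then show ?thesis
      by (rule lp_mut_exch_FQ_involves[OF assms(1) np assms(4) j hat])
  qed
  then show ?thesis
    unfolding lp_mut_var_def hat by blast
qed

end
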